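(* Let $G$ be a finitely generated group of exponential growth with finite generating set $A$, $S=A\cup A^{-1}$, and let $\psi:L\to G$, $L\subseteq S^*$, be a Cayley automatic representation of $G$. Then there exist constants $\lambda_1,\lambda_2>0$ such that, with $B_n=\{g\in G: d_A(g)\le n\}$ and $Q_n=\{g\in B_n : \lambda_1 d_A(g)\le|\psi^{-1}(g)|\le\lambda_2 d_A(g)\}$, one has $\lim_{n\to\infty}\#Q_n/\#B_n=1$. Moreover, for every $g\in Q_n$, writing $w=\psi^{-1}(g)$, $d_A(\pi(w),\psi(w))\le(1+1/\lambda_1)|w|$.
   Context: $\pi:S^*\to G$ is the evaluation map and $d_A$ the word metric of $\Gamma(G,A)$, $d_A(g)=d_A(e,g)$. Exponential growth means there is $\lambda>1$ with $\#B_n\ge\lambda^n$ for all large $n$. A Cayley automatic representation is a bijection $\psi:L\to G$ from a regular $L\subseteq S^*$ such that for each $a\in A$ the relation $\{(\psi^{-1}(g),\psi^{-1}(ga)) : g\in G\}$ is FA-recognizable (the language of convolutions — parallel readings of the two strings with the shorter padded by a new symbol — is regular). *)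

theory Defs
  imports "HOL-Algebra.Generated_Groups" Complex_Main
begin

definition regular_lang :: "'b set \<Rightarrow> 'b list set \<Rightarrow> bool" where
  "regular_lang Alph L \<longleftrightarrow> finite Alph \<and> L \<subseteq> lists Alph \<and>
     (\<exists>(Q::nat set) q0 F \<delta>. finite Q \<and> q0 \<in> Q \<and> F \<subseteq> Q \<and>
        (\<forall>q\<in>Q. \<forall>x\<in>Alph. \<delta> q x \<in> Q) \<and>
        L = {w \<in> lists Alph. foldl \<delta> q0 w \<in> F})"

(* convolution of two strings: read in parallel, shorter one padded by None *)
fun conv :: "'b list \<Rightarrow> 'b list \<Rightarrow> ('b option \<times> 'b option) list" where
  "conv [] [] = []"
| "conv (x # xs) [] = (Some x, None) # conv xs []"
| "conv [] (y # ys) = (None, Some y) # conv [] ys"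
| "conv (x # xs) (y # ys) = (Some x, Some y) # conv xs ys"

definition pad_alph :: "'b set \<Rightarrow> ('b option \<times> 'b option) set" where
  "pad_alph S = (insert None (Some ` S)) \<times> (insert None (Some ` S))"

definition sym_gens :: "('a, 'c) monoid_scheme \<Rightarrow> 'a set \<Rightarrow> 'a set" where
  "sym_gens G A = A \<union> (\<lambda>a. inv\<^bsub>G\<^esub> a) ` A"

definition evalw :: "('a, 'c) monoid_scheme \<Rightarrow> 'a list \<Rightarrow> 'a" where
  "evalw G w = foldr (\<lambda>x y. x \<otimes>\<^bsub>G\<^esub> y) w \<one>\<^bsub>G\<^esub>"

definition word_len :: "('a, 'c) monoid_scheme \<Rightarrow> 'a set \<Rightarrow> 'a \<Rightarrow> nat" where
  "word_len G A g = (LEAST n. \<exists>w \<in> lists (sym_gens G A). length w = n \<and> evalw G w = g)"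

definition word_dist :: "('a, 'c) monoid_scheme \<Rightarrow> 'a set \<Rightarrow> 'a \<Rightarrow> 'a \<Rightarrow> nat" where
  "word_dist G A g h = word_len G A (inv\<^bsub>G\<^esub> g \<otimes>\<^bsub>G\<^esub> h)"

definition ball_n :: "('a, 'c) monoid_scheme \<Rightarrow> 'a set \<Rightarrow> nat \<Rightarrow> 'a set" where
  "ball_n G A n = {g \<in> carrier G. word_len G A g \<le> n}"

definition exp_growth :: "('a, 'c) monoid_scheme \<Rightarrow> 'a set \<Rightarrow> bool" where
  "exp_growth G A \<longleftrightarrow> (\<exists>c::real. c > 1 \<and>
      (\<forall>\<^sub>F n in sequentially. real (card (ball_n G A n)) \<ge> c ^ n))"

definition cayley_automatic_rep ::
  "('a, 'c) monoid_scheme \<Rightarrow> 'a set \<Rightarrow> 'a list set \<Rightarrow> ('a list \<Rightarrow> 'a) \<Rightarrow> bool" where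
  "cayley_automatic_rep G A L \<psi> \<longleftrightarrow>
     regular_lang (sym_gens G A) L \<and> bij_betw \<psi> L (carrier G) \<and>
     (\<forall>a\<in>A. regular_lang (pad_alph (sym_gens G A))
        {conv (the_inv_into L \<psi> g) (the_inv_into L \<psi> (g \<otimes>\<^bsub>G\<^esub> a)) | g. g \<in> carrier G})"

end

theory Submission
  imports Defs
begin

text \<open>
  A Cayley automatic representation moves by a bounded amount along each edge of the Cayley
  graph: if \<open>|\<psi>\<inverse>(ga)|\<close> exceeded \<open>|\<psi>\<inverse>(g)|\<close> by more than the number of states of an
  automaton for the convolution of \<open>(\<psi>\<inverse>(g), \<psi>\<inverse>(ga))\<close>, the padded tail could be pumped
  down, giving \<open>\<psi>\<inverse>(g)\<close> a second partner. Summing along a geodesic gives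
  \<open>|\<psi>\<inverse>(g)| \<le> l\<^sub>2 d\<^sub>A(g)\<close> for \<open>g \<noteq> e\<close>.
  In the other direction, at most \<open>(#S + 1)\<^sup>m\<close> elements have representatives of length
  \<open>\<le> m\<close>. Choosing \<open>l\<^sub>1\<close> with \<open>(#S + 2)\<^bsup>l\<^sub>1 n\<^esup> = \<surd>c\<^sup>n\<close>, the elements of \<open>B\<^sub>n\<close> violating the
  lower bound number at most \<open>1 + \<surd>c\<^sup>n\<close>, which is negligible against \<open>#B\<^sub>n \<ge> c\<^sup>n\<close>.
  The distance estimate is the triangle inequality
  \<open>d\<^sub>A(\<pi>(w), \<psi>(w)) \<le> |w| + d\<^sub>A(\<psi>(w)) \<le> |w| + |w|/l\<^sub>1\<close>.
\<close>

context group
begin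

lemma evalw_closed: "set w \<subseteq> carrier G \<Longrightarrow> evalw G w \<in> carrier G"
  by (induction w) (auto simp: evalw_def)

lemma evalw_Nil [simp]: "evalw G [] = \<one>"
  by (simp add: evalw_def)

lemma evalw_append:
  "set xs \<subseteq> carrier G \<Longrightarrow> set ys \<subseteq> carrier G \<Longrightarrow> evalw G (xs @ ys) = evalw G xs \<otimes> evalw G ys"
  by (induction xs) (auto simp: evalw_def m_assoc evalw_closed[unfolded evalw_def])

lemma evalw_singleton: "x \<in> carrier G \<Longrightarrow> evalw G [x] = x"
  by (simp add: evalw_def)

lemma evalw_rev_map_inv:
  "set w \<subseteq> carrier G \<Longrightarrow> evalw G (rev (map (\<lambda>x. inv x) w)) = inv (evalw G w)"
proof (induction w)
  case (Cons x w)
  then have "set (rev (map (\<lambda>x. inv x) w)) \<subseteq> carrier G" "inv x \<in> carrier G" by auto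
  with Cons have "evalw G (rev (map (\<lambda>x. inv x) (x # w))) = inv (evalw G w) \<otimes> inv x"
    by (simp add: evalw_append evalw_singleton)
  also have "\<dots> = inv (x \<otimes> evalw G w)"
    using Cons by (simp add: inv_mult_group evalw_closed)
  finally show ?case by (simp add: evalw_def)
qed simp

lemma sym_gens_closed: "A \<subseteq> carrier G \<Longrightarrow> sym_gens G A \<subseteq> carrier G"
  unfolding sym_gens_def by auto

lemma inv_in_sym_gens: "A \<subseteq> carrier G \<Longrightarrow> s \<in> sym_gens G A \<Longrightarrow> inv s \<in> sym_gens G A"
  unfolding sym_gens_def by auto

lemma evalw_onto_generate:
  assumes "A \<subseteq> carrier G" "g \<in> generate G A"
  shows "\<exists>w \<in> lists (sym_gens G A). evalw G w = g"
  using assms(2)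
proof induction
  case one
  show ?case by (intro bexI[of _ "[]"]) auto
next
  case (incl h)
  then show ?case using assms(1)
    by (intro bexI[of _ "[h]"]) (auto simp: evalw_singleton sym_gens_def)
next
  case (inv h)
  then show ?case using assms(1)
    by (intro bexI[of _ "[inv h]"]) (auto simp: evalw_singleton sym_gens_def)
next
  case (eng h1 h2)
  then obtain w1 w2 where "w1 \<in> lists (sym_gens G A)" "w2 \<in> lists (sym_gens G A)"
    "evalw G w1 = h1" "evalw G w2 = h2" by blast
  moreover have "set w1 \<subseteq> carrier G" "set w2 \<subseteq> carrier G"
    using calculation sym_gens_closed[OF assms(1)] by auto
  ultimately show ?case
    by (intro bexI[of _ "w1 @ w2"]) (auto simp: evalw_append)
qed

end

locale finitely_generated_group = group +
  fixes A :: "'a set"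
  assumes finite_gens: "finite A"
    and gens_closed: "A \<subseteq> carrier G"
    and generate_gens: "generate G A = carrier G"
begin

abbreviation S :: "'a set" where "S \<equiv> sym_gens G A"

lemma finite_S: "finite S"
  using finite_gens by (simp add: sym_gens_def)

lemma S_closed: "S \<subseteq> carrier G"
  using sym_gens_closed[OF gens_closed] .

lemma evalw_lists_S_closed: "w \<in> lists S \<Longrightarrow> evalw G w \<in> carrier G"
  using S_closed by (intro evalw_closed) auto

lemma word_len_attained:
  assumes "g \<in> carrier G"
  obtains w where "w \<in> lists S" "length w = word_len G A g" "evalw G w = g"
proof -
  have "\<exists>n. \<exists>w \<in> lists S. length w = n \<and> evalw G w = g"
    using evalw_onto_generate[OF gens_closed] generate_gens assms by blast
  then have "\<exists>w \<in> lists S. length w = word_len G A g \<and> evalw G w = g"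
    unfolding word_len_def by (rule LeastI_ex)
  with that show ?thesis by blast
qed

lemma word_len_evalw_le: "w \<in> lists S \<Longrightarrow> word_len G A (evalw G w) \<le> length w"
  unfolding word_len_def by (rule Least_le) blast

lemma word_len_eq_0: "g \<in> carrier G \<Longrightarrow> word_len G A g = 0 \<Longrightarrow> g = \<one>"
  by (elim word_len_attained) simp

lemma word_len_inv_le:
  assumes "g \<in> carrier G"
  shows "word_len G A (inv g) \<le> word_len G A g"
proof -
  obtain w where w: "w \<in> lists S" "length w = word_len G A g" "evalw G w = g"
    using word_len_attained[OF assms] .
  have "set w \<subseteq> carrier G" using w(1) S_closed by auto
  then have "word_len G A (inv g) = word_len G A (evalw G (rev (map (\<lambda>x. inv x) w)))"
    using w(3) by (simp add: evalw_rev_map_inv)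
  also have "\<dots> \<le> length (rev (map (\<lambda>x. inv x) w))"
    using w(1) inv_in_sym_gens[OF gens_closed] by (intro word_len_evalw_le) auto
  finally show ?thesis using w(2) by simp
qed

lemma word_len_mult_le:
  assumes "g \<in> carrier G" "h \<in> carrier G"
  shows "word_len G A (g \<otimes> h) \<le> word_len G A g + word_len G A h"
proof -
  obtain v where v: "v \<in> lists S" "length v = word_len G A g" "evalw G v = g"
    using word_len_attained[OF assms(1)] .
  obtain w where w: "w \<in> lists S" "length w = word_len G A h" "evalw G w = h"
    using word_len_attained[OF assms(2)] .
  have "set v \<subseteq> carrier G" "set w \<subseteq> carrier G" using v(1) w(1) S_closed by auto
  then have "word_len G A (g \<otimes> h) = word_len G A (evalw G (v @ w))"
    using v(3) w(3) by (simp add: evalw_append)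
  also have "\<dots> \<le> length (v @ w)" using v(1) w(1) by (intro word_len_evalw_le) simp
  finally show ?thesis using v(2) w(2) by simp
qed

lemma word_dist_le_word_len:
  assumes "g \<in> carrier G" "h \<in> carrier G"
  shows "word_dist G A g h \<le> word_len G A g + word_len G A h"
proof -
  have "word_len G A (inv g \<otimes> h) \<le> word_len G A (inv g) + word_len G A h"
    using assms by (intro word_len_mult_le) auto
  with word_len_inv_le[OF assms(1)] show ?thesis unfolding word_dist_def by simp
qed

lemma finite_ball_n: "finite (ball_n G A n)"
proof -
  have "ball_n G A n \<subseteq> evalw G ` {w. set w \<subseteq> S \<and> length w \<le> n}"
  proof
    fix g assume "g \<in> ball_n G A n"
    then have g: "g \<in> carrier G" "word_len G A g \<le> n" by (auto simp: ball_n_def)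
    obtain w where "w \<in> lists S" "length w = word_len G A g" "evalw G w = g"
      using word_len_attained[OF g(1)] .
    with g(2) show "g \<in> evalw G ` {w. set w \<subseteq> S \<and> length w \<le> n}"
      by (intro image_eqI[of _ _ w]) auto
  qed
  then show ?thesis
    by (rule finite_surj[OF finite_lists_length_le[OF finite_S]])
qed

end

lemma foldl_in_states:
  "q \<in> Q \<Longrightarrow> \<forall>q\<in>Q. \<forall>x\<in>S. \<delta> q x \<in> Q \<Longrightarrow> w \<in> lists S \<Longrightarrow> foldl \<delta> q w \<in> Q"
  by (induction w arbitrary: q) auto

lemma foldl_remove_loop:
  assumes "finite Q" "q \<in> Q" "\<forall>q\<in>Q. \<forall>x\<in>S. \<delta> q x \<in> Q" "t \<in> lists S" "card Q \<le> length t"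
  obtains i j where "i < j" "j \<le> length t" "foldl \<delta> q (take i t @ drop j t) = foldl \<delta> q t"
proof -
  define f where "f i = foldl \<delta> q (take i t)" for i
  have "f ` {0..length t} \<subseteq> Q"
    unfolding f_def using assms(2-4) by (auto intro!: foldl_in_states[where S = S] dest: in_set_takeD)
  moreover have "card Q < card {0..length t}" using assms(5) by simp
  ultimately have "\<not> inj_on f {0..length t}"
    using card_inj_on_le[of f "{0..length t}" Q] assms(1) by fastforce
  then obtain i j where ij: "i < j" "j \<le> length t" "f i = f j"
    unfolding inj_on_def by (metis atLeastAtMost_iff linorder_neqE_nat)
  have "foldl \<delta> q (take i t @ drop j t) = foldl \<delta> (f j) (drop j t)"
    using ij(3) by (simp add: f_def)
  also have "\<dots> = foldl \<delta> q t"
    unfolding f_def by (metis append_take_drop_id foldl_append)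
  finally show ?thesis using that ij(1,2) by blast
qed

lemma conv_inj: "conv u v = conv u' v' \<Longrightarrow> u = u' \<and> v = v'"
  by (induction u v arbitrary: u' v' rule: conv.induct) (case_tac u'; case_tac v'; auto)+

lemma conv_swap: "conv v u = map prod.swap (conv u v)"
  by (induction u v rule: conv.induct) auto

lemma conv_padded_right:
  "length u \<le> length v \<Longrightarrow>
   conv u v = conv u (take (length u) v) @ map (\<lambda>y. (None, Some y)) (drop (length u) v)"
proof (induction u v rule: conv.induct)
  case (3 y ys)
  then show ?case by (induction ys) auto
qed auto

lemma regular_lang_conv_shorten_right:
  fixes R :: "('a option \<times> 'a option) list set"
  assumes "regular_lang S R"
  obtains N where
    "\<And>u v. conv u v \<in> R \<Longrightarrow> length u + N \<le> length v \<Longrightarrow> \<exists>v'. length v' < length v \<and> conv u v' \<in> R"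
proof -
  obtain Q :: "nat set" and q0 F \<delta> where Q: "finite Q" "q0 \<in> Q" "\<forall>q\<in>Q. \<forall>x\<in>S. \<delta> q x \<in> Q"
    and R: "R = {w \<in> lists S. foldl \<delta> q0 w \<in> F}"
    using assms unfolding regular_lang_def by blast
  have "\<exists>v'. length v' < length v \<and> conv u v' \<in> R"
    if uv: "conv u v \<in> R" and long: "length u + card Q \<le> length v" for u v
  proof -
    define p where "p = conv u (take (length u) v)"
    define d where "d = drop (length u) v"
    define t where "t = map (\<lambda>y. (None :: 'a option, Some y)) d"
    have split: "conv u v = p @ t"
      unfolding p_def t_def d_def using long by (intro conv_padded_right) simp
    have pS: "p \<in> lists S" and tS: "t \<in> lists S" using uv split R by auto
    have "card Q \<le> length t" using long by (simp add: t_def d_def)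
    then obtain i j where ij: "i < j" "j \<le> length t"
      and loop: "foldl \<delta> (foldl \<delta> q0 p) (take i t @ drop j t) = foldl \<delta> (foldl \<delta> q0 p) t"
      using foldl_remove_loop[OF Q(1) foldl_in_states[OF Q(2,3) pS] Q(3) tS] by blast
    define v' where "v' = take (length u) v @ take i d @ drop j d"
    have v': "conv u v' = p @ take i t @ drop j t"
      using long conv_padded_right[of u v']
      by (simp add: v'_def p_def t_def take_map drop_map min_def)
    have "conv u v' \<in> lists S" using v' pS tS by (auto dest: in_set_takeD in_set_dropD)
    moreover have "foldl \<delta> q0 (conv u v') \<in> F" using v' loop split uv R by simp
    moreover have "length v' < length v" using ij long by (simp add: v'_def t_def d_def)
    ultimately show ?thesis using R by blast
  qed
  with that show ?thesis by blast
qed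

lemma regular_lang_swap: "regular_lang S R \<Longrightarrow> regular_lang (prod.swap ` S) (map prod.swap ` R)"
proof -
  have foldl_swap: "foldl (\<lambda>q x. \<delta> q (prod.swap x)) q (map prod.swap w) = foldl \<delta> q w"
    for \<delta> and q :: nat and w :: "('a \<times> 'b) list"
    by (induction w arbitrary: q) auto
  assume "regular_lang S R"
  then obtain Q :: "nat set" and q0 F \<delta> where Q: "finite Q" "q0 \<in> Q" "F \<subseteq> Q"
      "\<forall>q\<in>Q. \<forall>x\<in>S. \<delta> q x \<in> Q"
    and R: "R = {w \<in> lists S. foldl \<delta> q0 w \<in> F}" and fin: "finite S"
    unfolding regular_lang_def by blast
  have "map prod.swap ` R = {w \<in> lists (prod.swap ` S). foldl (\<lambda>q x. \<delta> q (prod.swap x)) q0 w \<in> F}"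
  proof (intro equalityI subsetI)
    fix w assume w: "w \<in> {w \<in> lists (prod.swap ` S). foldl (\<lambda>q x. \<delta> q (prod.swap x)) q0 w \<in> F}"
    then have "map prod.swap w \<in> lists S" by force
    then show "w \<in> map prod.swap ` R"
      using w foldl_swap[of \<delta> q0 "map prod.swap w"] R
      by (intro image_eqI[of _ _ "map prod.swap w"]) auto
  qed (use R foldl_swap in auto)
  then show ?thesis
    unfolding regular_lang_def using Q fin
    by (intro conjI exI[of _ Q] exI[of _ q0] exI[of _ F] exI[of _ "\<lambda>q x. \<delta> q (prod.swap x)"]) auto
qed

lemma regular_conv_graph_length_le:
  assumes "regular_lang S {conv (f x) (h x) | x. x \<in> X}" "inj_on f X"
  obtains N where "\<And>x. x \<in> X \<Longrightarrow> length (h x) \<le> length (f x) + N"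
proof -
  obtain N where pump: "\<And>u v. conv u v \<in> {conv (f x) (h x) | x. x \<in> X} \<Longrightarrow> length u + N \<le> length v \<Longrightarrow>
      \<exists>v'. length v' < length v \<and> conv u v' \<in> {conv (f x) (h x) | x. x \<in> X}"
    using regular_lang_conv_shorten_right[OF assms(1)] by blast
  have "length (h x) \<le> length (f x) + N" if x: "x \<in> X" for x
  proof (rule ccontr)
    assume "\<not> ?thesis"
    then obtain v' y where v': "length v' < length (h x)" "y \<in> X" "conv (f x) v' = conv (f y) (h y)"
      using pump[of "f x" "h x"] x by force
    then have "f x = f y" "v' = h y" using conv_inj by blast+
    with inj_onD[OF assms(2)] x v' show False by blast
  qed
  with that show ?thesis by blast
qed

lemma regular_conv_graph_length_ge:
  assumes "regular_lang S {conv (f x) (h x) | x. x \<in> X}" "inj_on h X"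
  obtains N where "\<And>x. x \<in> X \<Longrightarrow> length (f x) \<le> length (h x) + N"
proof -
  have "{conv (h x) (f x) | x. x \<in> X} = map prod.swap ` {conv (f x) (h x) | x. x \<in> X}"
    by (auto simp: conv_swap[of "h _"])
  with regular_lang_swap[OF assms(1)] have "regular_lang (prod.swap ` S) {conv (h x) (f x) | x. x \<in> X}"
    by simp
  from regular_conv_graph_length_le[OF this assms(2)] that show ?thesis by blast
qed

lemma sum_atMost_power_le_Suc_power: "(\<Sum>i\<le>m. s ^ i) \<le> (Suc s :: nat) ^ m"
proof (induction m)
  case (Suc m)
  have "s * s ^ m \<le> s * Suc s ^ m" by (simp add: power_mono)
  from add_mono[OF Suc.IH this] show ?case by simp
qed simp

lemma power_floor_log_le_sqrt_power:
  fixes k c :: real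
  assumes "1 < k" "1 \<le> c"
  shows "k ^ nat \<lfloor>ln c / (2 * ln k) * n\<rfloor> \<le> sqrt c ^ n"
proof -
  have lnk: "0 < ln k" using assms(1) by simp
  have "0 \<le> ln c / (2 * ln k) * n" using assms lnk by simp
  then have "k ^ nat \<lfloor>ln c / (2 * ln k) * n\<rfloor> \<le> k powr (ln c / (2 * ln k) * n)"
    using assms(1) by (subst powr_realpow[symmetric]) (auto intro!: powr_mono)
  also have "\<dots> = exp (n * (ln c / 2))"
    using lnk assms(1) by (simp add: powr_def)
  also have "\<dots> = sqrt c ^ n"
    using assms(2) by (simp add: exp_of_nat_mult ln_sqrt[symmetric])
  finally show ?thesis .
qed

lemma ratio_tendsto_one_of_exponential:
  fixes q b :: "nat \<Rightarrow> real"
  assumes "1 < c" "0 \<le> s" "s < c"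
    and "\<And>n. q n \<le> b n" "\<And>n. b n - q n \<le> 1 + s ^ n"
    and "\<forall>\<^sub>F n in sequentially. c ^ n \<le> b n"
  shows "(\<lambda>n. q n / b n) \<longlonglongrightarrow> 1"
proof (rule tendsto_sandwich)
  have "(\<lambda>n. (1 / c) ^ n + (s / c) ^ n) \<longlonglongrightarrow> 0 + 0"
    using assms(1-3) by (intro tendsto_add LIMSEQ_power_zero) auto
  then show "(\<lambda>n. 1 - ((1 / c) ^ n + (s / c) ^ n)) \<longlonglongrightarrow> 1"
    using tendsto_diff[OF tendsto_const] by fastforce
  show "\<forall>\<^sub>F n in sequentially. q n / b n \<le> 1"
    using assms(6)
  proof eventually_elim
    case (elim n)
    moreover have "0 < c ^ n" using assms(1) by simp
    ultimately show ?case using assms(4)[of n] by (simp add: divide_le_eq_1)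
  qed
  show "\<forall>\<^sub>F n in sequentially. 1 - ((1 / c) ^ n + (s / c) ^ n) \<le> q n / b n"
    using assms(6)
  proof eventually_elim
    case (elim n)
    have "0 < c ^ n" using assms(1) by simp
    with elim have "(b n - q n) / b n \<le> (1 + s ^ n) / c ^ n"
      using assms(2,5) by (intro frac_le) auto
    moreover have "(b n - q n) / b n = 1 - q n / b n"
      using elim \<open>0 < c ^ n\<close> by (simp add: diff_divide_distrib)
    ultimately show ?case by (simp add: add_divide_distrib power_divide)
  qed
qed simp

locale cayley_automatic_group = finitely_generated_group +
  fixes L :: "'a list set" and \<psi> :: "'a list \<Rightarrow> 'a"
  assumes cayley_automatic: "cayley_automatic_rep G A L \<psi>"
begin

abbreviation rep :: "'a \<Rightarrow> 'a list" where "rep \<equiv> the_inv_into L \<psi>"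

lemma bij_psi: "bij_betw \<psi> L (carrier G)"
  using cayley_automatic by (simp add: cayley_automatic_rep_def)

lemma rep_in_lists_S: "g \<in> carrier G \<Longrightarrow> rep g \<in> lists S"
  using bij_betw_the_inv_into[OF bij_psi] cayley_automatic
  by (auto simp: bij_betw_def cayley_automatic_rep_def regular_lang_def)

lemma psi_rep: "g \<in> carrier G \<Longrightarrow> \<psi> (rep g) = g"
  using f_the_inv_into_f_bij_betw[OF bij_psi] by blast

lemma inj_on_rep: "inj_on rep (carrier G)"
  using bij_betw_the_inv_into[OF bij_psi] by (simp add: bij_betw_def)

lemma rep_length_mult_sym_gen_le:
  assumes "s \<in> S"
  obtains N where "\<And>g. g \<in> carrier G \<Longrightarrow> length (rep (g \<otimes> s)) \<le> length (rep g) + N"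
proof -
  obtain a where a: "a \<in> A" "s = a \<or> s = inv a"
    using assms by (auto simp: sym_gens_def)
  then have aG: "a \<in> carrier G" using gens_closed by auto
  have reg: "regular_lang (pad_alph S) {conv (rep g) (rep (g \<otimes> a)) | g. g \<in> carrier G}"
    using cayley_automatic a(1) by (simp add: cayley_automatic_rep_def)
  show ?thesis
  proof (cases "s = a")
    case True
    with regular_conv_graph_length_le[OF reg inj_on_rep] that show ?thesis by blast
  next
    case False
    have "inj_on (\<lambda>g. rep (g \<otimes> a)) (carrier G)"
    proof (rule inj_onI)
      fix x y assume xy: "x \<in> carrier G" "y \<in> carrier G" "rep (x \<otimes> a) = rep (y \<otimes> a)"
      then have "x \<otimes> a = y \<otimes> a" using inj_onD[OF inj_on_rep] aG by simp
      with xy aG show "x = y" by simp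
    qed
    then obtain N where N: "\<And>g. g \<in> carrier G \<Longrightarrow> length (rep g) \<le> length (rep (g \<otimes> a)) + N"
      using regular_conv_graph_length_ge[OF reg] by blast
    have "length (rep (g \<otimes> s)) \<le> length (rep g) + N" if "g \<in> carrier G" for g
      using N[of "g \<otimes> s"] that a(2) False aG by (simp add: m_assoc)
    with that show ?thesis by blast
  qed
qed

lemma rep_length_mult_le:
  obtains C where "\<And>g s. g \<in> carrier G \<Longrightarrow> s \<in> S \<Longrightarrow> length (rep (g \<otimes> s)) \<le> length (rep g) + C"
proof -
  have "\<forall>s\<in>S. \<exists>N. \<forall>g\<in>carrier G. length (rep (g \<otimes> s)) \<le> length (rep g) + N"
    by (metis rep_length_mult_sym_gen_le)
  then obtain N where N: "\<And>s g. s \<in> S \<Longrightarrow> g \<in> carrier G \<Longrightarrow> length (rep (g \<otimes> s)) \<le> length (rep g) + N s"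
    by metis
  have "N s \<le> sum N S" if "s \<in> S" for s
    using finite_S that by (intro member_le_sum) auto
  with N that show ?thesis by (meson add_le_mono le_refl le_trans)
qed

lemma rep_length_le_affine:
  obtains K C where "\<And>g. g \<in> carrier G \<Longrightarrow> length (rep g) \<le> K + C * word_len G A g"
proof -
  obtain C where C: "\<And>g s. g \<in> carrier G \<Longrightarrow> s \<in> S \<Longrightarrow> length (rep (g \<otimes> s)) \<le> length (rep g) + C"
    using rep_length_mult_le by blast
  have evalw: "length (rep (evalw G w)) \<le> length (rep \<one>) + C * length w" if "w \<in> lists S" for w
    using that
  proof (induction w rule: rev_induct)
    case (snoc s w)
    then have "evalw G (w @ [s]) = evalw G w \<otimes> s"
      using S_closed by (subst evalw_append) (auto simp: evalw_singleton)
    with C[of "evalw G w" s] snoc evalw_lists_S_closed show ?case by simp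
  qed simp
  have "length (rep g) \<le> length (rep \<one>) + C * word_len G A g" if "g \<in> carrier G" for g
    using word_len_attained[OF that] evalw by metis
  with that show ?thesis by blast
qed

lemma rep_length_le_linear:
  obtains l2 :: real where "0 < l2"
    "\<And>g. g \<in> carrier G \<Longrightarrow> 1 \<le> word_len G A g \<Longrightarrow> real (length (rep g)) \<le> l2 * word_len G A g"
proof -
  obtain K C where KC: "\<And>g. g \<in> carrier G \<Longrightarrow> length (rep g) \<le> K + C * word_len G A g"
    using rep_length_le_affine by blast
  have "length (rep g) \<le> real (K + C + 1) * word_len G A g"
    if "g \<in> carrier G" "1 \<le> word_len G A g" for g
  proof -
    have "length (rep g) \<le> K * word_len G A g + C * word_len G A g"
      using KC[OF that(1)] that(2) by (metis add_le_mono1 le_trans mult.right_neutral mult_le_mono2)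
    then show ?thesis by (simp add: distrib_right flip: of_nat_mult of_nat_add)
  qed
  with that[of "real (K + C + 1)"] show ?thesis by simp
qed

definition comparable_ball :: "real \<Rightarrow> real \<Rightarrow> nat \<Rightarrow> 'a set" where
  "comparable_ball l1 l2 n = {g \<in> ball_n G A n.
     l1 * real (word_len G A g) \<le> real (length (rep g)) \<and> real (length (rep g)) \<le> l2 * real (word_len G A g)}"

lemma short_reps_subset:
  "{g \<in> carrier G. length (rep g) \<le> m} \<subseteq> \<psi> ` {w. set w \<subseteq> S \<and> length w \<le> m}"
proof
  fix g assume "g \<in> {g \<in> carrier G. length (rep g) \<le> m}"
  with rep_in_lists_S psi_rep show "g \<in> \<psi> ` {w. set w \<subseteq> S \<and> length w \<le> m}"
    by (intro image_eqI[of _ _ "rep g"]) auto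
qed

lemma finite_short_reps: "finite {g \<in> carrier G. length (rep g) \<le> m}"
  by (rule finite_surj[OF finite_lists_length_le[OF finite_S] short_reps_subset])

lemma card_short_reps_le: "card {g \<in> carrier G. length (rep g) \<le> m} \<le> Suc (card S) ^ m"
proof -
  have "card {g \<in> carrier G. length (rep g) \<le> m} \<le> card {w. set w \<subseteq> S \<and> length w \<le> m}"
    by (rule surj_card_le[OF finite_lists_length_le[OF finite_S] short_reps_subset])
  also have "\<dots> = (\<Sum>i\<le>m. card S ^ i)" by (rule card_lists_length_le[OF finite_S])
  also have "\<dots> \<le> Suc (card S) ^ m" by (rule sum_atMost_power_le_Suc_power)
  finally show ?thesis .
qed

lemma ball_diff_comparable_subset:
  fixes l1 l2 :: real
  assumes "0 \<le> l1"
    and "\<And>g. g \<in> carrier G \<Longrightarrow> 1 \<le> word_len G A g \<Longrightarrow> real (length (rep g)) \<le> l2 * word_len G A g"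
  shows "ball_n G A n - comparable_ball l1 l2 n \<subseteq> insert \<one> {g \<in> carrier G. length (rep g) \<le> nat \<lfloor>l1 * n\<rfloor>}"
proof
  fix g assume g: "g \<in> ball_n G A n - comparable_ball l1 l2 n"
  show "g \<in> insert \<one> {g \<in> carrier G. length (rep g) \<le> nat \<lfloor>l1 * n\<rfloor>}"
  proof (cases "word_len G A g = 0")
    case True
    with g word_len_eq_0 show ?thesis by (simp add: ball_n_def)
  next
    case False
    with g assms(2) have "length (rep g) < l1 * word_len G A g"
      by (auto simp: ball_n_def comparable_ball_def)
    also have "\<dots> \<le> l1 * n" using g assms(1) by (simp add: ball_n_def mult_left_mono)
    finally show ?thesis using g by (auto simp: ball_n_def le_nat_floor less_imp_le)
  qed
qed

text \<open>The base \<open>#S + 2\<close> rather than \<open>#S + 1\<close> keeps the logarithm positive when \<open>S = {}\<close>.\<close>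

lemma card_ball_diff_comparable_le:
  fixes c l2 :: real
  assumes "1 \<le> c"
    and "\<And>g. g \<in> carrier G \<Longrightarrow> 1 \<le> word_len G A g \<Longrightarrow> real (length (rep g)) \<le> l2 * word_len G A g"
  shows "real (card (ball_n G A n - comparable_ball (ln c / (2 * ln (card S + 2))) l2 n)) \<le> 1 + sqrt c ^ n"
proof -
  define k :: real where "k = card S + 2"
  define m where "m = nat \<lfloor>ln c / (2 * ln k) * n\<rfloor>"
  have "0 \<le> ln c / (2 * ln k)" using assms(1) by (simp add: k_def)
  from ball_diff_comparable_subset[OF this assms(2)]
  have "card (ball_n G A n - comparable_ball (ln c / (2 * ln k)) l2 n)
      \<le> card (insert \<one> {g \<in> carrier G. length (rep g) \<le> m})"
    unfolding m_def by (intro card_mono) (simp_all add: finite_short_reps)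
  also have "\<dots> \<le> Suc (Suc (card S) ^ m)"
    using card_short_reps_le[of m] by (simp add: card_insert_if finite_short_reps)
  finally have "real (card (ball_n G A n - comparable_ball (ln c / (2 * ln k)) l2 n))
      \<le> real (Suc (Suc (card S) ^ m))"
    by (simp only: of_nat_le_iff)
  also have "\<dots> \<le> 1 + k ^ m"
    using power_mono[of "real (Suc (card S))" k m] by (simp add: k_def)
  also have "k ^ m \<le> sqrt c ^ n"
    unfolding m_def using assms(1) by (intro power_floor_log_le_sqrt_power) (simp add: k_def)
  finally show ?thesis by (simp add: k_def)
qed

lemma comparable_ball_density_tendsto_1:
  fixes c l2 :: real
  assumes "1 < c" "\<forall>\<^sub>F n in sequentially. c ^ n \<le> real (card (ball_n G A n))"
    and "\<And>g. g \<in> carrier G \<Longrightarrow> 1 \<le> word_len G A g \<Longrightarrow> real (length (rep g)) \<le> l2 * word_len G A g"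
  defines "l1 \<equiv> ln c / (2 * ln (card S + 2))"
  shows "(\<lambda>n. real (card (comparable_ball l1 l2 n)) / real (card (ball_n G A n))) \<longlonglongrightarrow> 1"
proof (rule ratio_tendsto_one_of_exponential[OF assms(1) _ _ _ _ assms(2)])
  have "sqrt c * 1 < sqrt c * sqrt c" using assms(1) by (intro mult_strict_left_mono) auto
  then show "sqrt c < c" using assms(1) by simp
  fix n
  have sub: "comparable_ball l1 l2 n \<subseteq> ball_n G A n"
    by (auto simp: comparable_ball_def)
  then show "real (card (comparable_ball l1 l2 n)) \<le> real (card (ball_n G A n))"
    by (simp add: card_mono finite_ball_n)
  have "real (card (ball_n G A n)) - real (card (comparable_ball l1 l2 n))
      = real (card (ball_n G A n - comparable_ball l1 l2 n))"
    using sub finite_ball_n by (simp add: card_Diff_subset finite_subset card_mono of_nat_diff)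
  also have "\<dots> \<le> 1 + sqrt c ^ n"
    unfolding l1_def using assms(1,3) by (intro card_ball_diff_comparable_le) auto
  finally show "real (card (ball_n G A n)) - real (card (comparable_ball l1 l2 n)) \<le> 1 + sqrt c ^ n" .
qed (use assms(1) in simp)

lemma word_dist_evalw_rep_le:
  assumes "0 < l1" "g \<in> comparable_ball l1 l2 n"
  shows "real (word_dist G A (evalw G (rep g)) (\<psi> (rep g))) \<le> (1 + 1 / l1) * real (length (rep g))"
proof -
  have g: "g \<in> carrier G" "l1 * word_len G A g \<le> length (rep g)"
    using assms(2) by (auto simp: comparable_ball_def ball_n_def)
  have "word_dist G A (evalw G (rep g)) (\<psi> (rep g)) \<le> word_len G A (evalw G (rep g)) + word_len G A g"
    using word_dist_le_word_len rep_in_lists_S evalw_lists_S_closed psi_rep g(1) by metis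
  also have "\<dots> \<le> length (rep g) + word_len G A g"
    using word_len_evalw_le[OF rep_in_lists_S[OF g(1)]] by simp
  finally have "real (word_dist G A (evalw G (rep g)) (\<psi> (rep g))) \<le> length (rep g) + real (word_len G A g)"
    by linarith
  moreover have "real (word_len G A g) \<le> length (rep g) / l1"
    using g(2) assms(1) by (simp add: pos_le_divide_eq mult.commute)
  ultimately show ?thesis by (simp add: algebra_simps)
qed

end

theorem mainTheorem13:
  fixes G :: "('a, 'c) monoid_scheme" and A :: "'a set"
    and L :: "'a list set" and \<psi> :: "'a list \<Rightarrow> 'a"
  assumes "group G" and "finite A" and "A \<subseteq> carrier G"
    and "generate G A = carrier G"
    and "exp_growth G A"
    and "cayley_automatic_rep G A L \<psi>"
  shows "\<exists>l1 l2::real. l1 > 0 \<and> l2 > 0 \<and>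
     (let Q = (\<lambda>n. {g \<in> ball_n G A n.
                 l1 * real (word_len G A g) \<le> real (length (the_inv_into L \<psi> g)) \<and>
                 real (length (the_inv_into L \<psi> g)) \<le> l2 * real (word_len G A g)})
      in ((\<lambda>n. real (card (Q n)) / real (card (ball_n G A n))) \<longlonglongrightarrow> 1) \<and>
         (\<forall>n. \<forall>g \<in> Q n. let w = the_inv_into L \<psi> g in
            real (word_dist G A (evalw G w) (\<psi> w)) \<le> (1 + 1 / l1) * real (length w)))"
proof -
  interpret cayley_automatic_group G A L \<psi>
    using assms by (intro cayley_automatic_group.intro finitely_generated_group.intro
        finitely_generated_group_axioms.intro cayley_automatic_group_axioms.intro)
  obtain c :: real where c: "1 < c" and growth: "\<forall>\<^sub>F n in sequentially. c ^ n \<le> real (card (ball_n G A n))"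
    using assms(5) unfolding exp_growth_def by blast
  obtain l2 :: real where l2: "0 < l2"
    and upper: "\<And>g. g \<in> carrier G \<Longrightarrow> 1 \<le> word_len G A g \<Longrightarrow> real (length (rep g)) \<le> l2 * word_len G A g"
    using rep_length_le_linear by blast
  define l1 where "l1 = ln c / (2 * ln (card S + 2))"
  have l1: "0 < l1" using c by (simp add: l1_def)
  have "(\<lambda>n. real (card (comparable_ball l1 l2 n)) / real (card (ball_n G A n))) \<longlonglongrightarrow> 1"
    unfolding l1_def using c growth upper by (rule comparable_ball_density_tendsto_1)
  moreover have "\<forall>n. \<forall>g \<in> comparable_ball l1 l2 n.
      real (word_dist G A (evalw G (rep g)) (\<psi> (rep g))) \<le> (1 + 1 / l1) * real (length (rep g))"
    using word_dist_evalw_rep_le[OF l1] by blast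
  ultimately show ?thesis
    using l1 l2 unfolding comparable_ball_def Let_def by blast
qed

end
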